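(* Let $\ell\in\{2,3\}$ and let $G\subseteq\Delta_2(\mathbb{F}_\ell)$ be a subgroup with $\operatorname{pr}_i(G)=\operatorname{GL}_2(\mathbb{F}_\ell)$ for each $i\in\{1,2\}$. Then $G=\Delta_2(\mathbb{F}_\ell)$ if and only if there exists $(g_1,g_2)\in G$ with $(\dim_1g_1,\dim_1g_2)\in\{(0,1),(1,0),(1,2),(2,1)\}$ when $\ell=2$, respectively $(\dim_1g_1,\dim_1g_2)\in\{(1,2),(2,1)\}$ when $\ell=3$.
   Context: $\Delta_2(\mathbb{F}_\ell)=\{(g_1,g_2)\in\operatorname{GL}_2(\mathbb{F}_\ell)^2:\det g_1=\det g_2\}$; $\operatorname{pr}_i$ is the projection onto the $i$-th factor; for $g\in\operatorname{GL}_2(\mathbb{F}_\ell)$, $\dim_1g=\dim_{\mathbb{F}_\ell}\ker(g-I)$. *)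

theory Defs
  imports "HOL-Algebra.Group"
begin

text \<open>F_l is modelled as the residues {0..<l} (l prime); a 2x2 matrix
 [[a,b],[c,d]] over F_l is the tuple (a,b,c,d).\<close>

type_synonym mat2 = "int \<times> int \<times> int \<times> int"

definition Fl :: "int \<Rightarrow> int set" where
  "Fl l = {0..<l}"

fun mmul :: "int \<Rightarrow> mat2 \<Rightarrow> mat2 \<Rightarrow> mat2" where
  "mmul l (a,b,c,d) (e,f,g,h) =
     ((a*e+b*g) mod l, (a*f+b*h) mod l, (c*e+d*g) mod l, (c*f+d*h) mod l)"

fun mdet :: "int \<Rightarrow> mat2 \<Rightarrow> int" where
  "mdet l (a,b,c,d) = (a*d - b*c) mod l"

definition mone :: mat2 where
  "mone = (1,0,0,1)"

definition GL2 :: "int \<Rightarrow> mat2 set" where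
  "GL2 l = {(a,b,c,d). a \<in> Fl l \<and> b \<in> Fl l \<and> c \<in> Fl l \<and> d \<in> Fl l
                        \<and> mdet l (a,b,c,d) \<noteq> 0}"

definition Delta2 :: "int \<Rightarrow> (mat2 \<times> mat2) set" where
  "Delta2 l = {(g1,g2). g1 \<in> GL2 l \<and> g2 \<in> GL2 l \<and> mdet l g1 = mdet l g2}"

definition Delta2_grp :: "int \<Rightarrow> (mat2 \<times> mat2) monoid" where
  "Delta2_grp l = \<lparr> carrier = Delta2 l,
      mult = (\<lambda>x y. (mmul l (fst x) (fst y), mmul l (snd x) (snd y))),
      one = (mone, mone) \<rparr>"

fun ker1 :: "int \<Rightarrow> mat2 \<Rightarrow> (int \<times> int) set" where
  "ker1 l (a,b,c,d) = {(x,y). x \<in> Fl l \<and> y \<in> Fl l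
      \<and> ((a-1)*x + b*y) mod l = 0 \<and> (c*x + (d-1)*y) mod l = 0}"

text \<open>dim_1 g = dim_{F_l} ker(g - I), i.e. the d with |ker(g-I)| = l^d\<close>
definition dim1 :: "int \<Rightarrow> mat2 \<Rightarrow> nat" where
  "dim1 l g = (THE d::nat. card (ker1 l g) = nat l ^ d)"

end

theory Submission
  imports Defs "HOL-Algebra.Elementary_Groups" "HOL-Algebra.Coset" "HOL-Number_Theory.Cong"
begin

(* If (g1, g2) in G has fixed-space dimensions (1, 2), then g2 = 1 and g1 is a transvection:
   det g1 = det g2 = 1 and g1 fixes a line.  Since pr1(G) = GL2, the fibre
   N = {a. (a, 1) in G} is normal in GL2.  Over F_2 and F_3 every transvection is conjugate
   to the elementary matrix (1 1; 0 1), and the normal closure of that matrix contains all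
   elementary matrices, hence all of SL2.  So SL2 x 1 <= G, and pr2(G) = GL2 forces
   G = Delta2.  The case (2, 1) is symmetric, and for l = 2 the cases (0, 1) and (1, 0)
   reduce to it by cubing, because in GL2(F_2) the fixed-point-free elements have order 3
   and the transvections have order 2.  Conversely, (1, (1 1; 0 1)) in Delta2 has
   dimensions (2, 1). *)

section \<open>Matrix arithmetic modulo l\<close>

lemma mmul_assoc: "mmul l (mmul l x y) z = mmul l x (mmul l y z)"
proof -
  \<comment> \<open>Writing each inner residue t mod l as t - (t div l) * l turns the congruence
    into an ideal membership problem that algebra decides.\<close>
  have "mmul l (mmul l (a,b,c,d) (e,f,g,h)) (i,j,k,m) = mmul l (a,b,c,d) (mmul l (e,f,g,h) (i,j,k,m))"
    for a b c d e f g h i j k m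
    apply (simp only: mmul.simps prod.inject mod_eq_dvd_iff dvd_def)
    apply (simp only: minus_div_mult_eq_mod[symmetric])
    apply (intro conjI; algebra)
    done
  then show ?thesis
    by (cases x; cases y; cases z) simp_all
qed

lemma mdet_mmul: "mdet l (mmul l x y) = (mdet l x * mdet l y) mod l"
proof -
  have "mdet l (mmul l (a,b,c,d) (e,f,g,h)) = (mdet l (a,b,c,d) * mdet l (e,f,g,h)) mod l"
    for a b c d e f g h
    apply (simp only: mmul.simps mdet.simps mod_mod_trivial mod_eq_dvd_iff dvd_def)
    apply (simp only: minus_div_mult_eq_mod[symmetric])
    apply algebra
    done
  then show ?thesis
    by (cases x; cases y) simp_all
qed

lemma mdet_mod [simp]: "mdet l x mod l = mdet l x"
  by (cases x) simp

lemma mmul_mone [simp]: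
  assumes "x \<in> GL2 l"
  shows "mmul l mone x = x" "mmul l x mone = x"
  using assms by (auto simp: GL2_def Fl_def mone_def)

lemma mone_GL2: "l > 1 \<Longrightarrow> mone \<in> GL2 l"
  by (simp add: GL2_def Fl_def mone_def)

lemma mdet_mone: "l > 1 \<Longrightarrow> mdet l mone = 1"
  by (simp add: mone_def)

lemma GL2_not_dvd_mdet: "x \<in> GL2 l \<Longrightarrow> \<not> l dvd mdet l x"
  by (cases x) (simp add: GL2_def dvd_eq_mod_eq_0)

lemma GL2_mmul:
  assumes l: "prime l" and x: "x \<in> GL2 l" and y: "y \<in> GL2 l"
  shows "mmul l x y \<in> GL2 l"
proof -
  have "mdet l (mmul l x y) \<noteq> 0"
    using l x y by (simp add: mdet_mmul prime_dvd_mult_iff GL2_not_dvd_mdet flip: dvd_eq_mod_eq_0)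
  moreover have "l > 0"
    using l prime_gt_0_int by blast
  ultimately show ?thesis
    by (cases x; cases y) (auto simp: GL2_def Fl_def)
qed

lemma GL2_left_inverse:
  assumes l: "prime l" and x: "x \<in> GL2 l"
  shows "\<exists>y \<in> GL2 l. mmul l y x = mone"
proof -
  obtain a b c d where x_def: "x = (a,b,c,d)"
    by (cases x)
  have "l > 1"
    using l prime_gt_1_int by blast
  have "coprime (mdet l x) l"
    using l x by (simp add: coprime_commute prime_imp_coprime GL2_not_dvd_mdet)
  then obtain u where u: "[mdet l x * u = 1] (mod l)"
    using cong_solve_coprime_int by blast
  \<comment> \<open>The adjugate of x, scaled by an inverse u of det x modulo l.\<close>
  define y where "y = ((u*d) mod l, (-(u*b)) mod l, (-(u*c)) mod l, (u*a) mod l)"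
  have "mmul l y x = ((u * (a*d - b*c)) mod l, 0 mod l, 0 mod l, (u * (a*d - b*c)) mod l)"
    unfolding y_def x_def
    apply (simp only: mmul.simps prod.inject mod_eq_dvd_iff dvd_def)
    apply (simp only: minus_div_mult_eq_mod[symmetric])
    apply (intro conjI; algebra)
    done
  also have "(u * (a*d - b*c)) mod l = 1"
    using u \<open>l > 1\<close> by (simp add: x_def cong_def mod_mult_right_eq mult.commute)
  finally have inv: "mmul l y x = mone"
    by (simp add: mone_def)
  then have "(mdet l y * mdet l x) mod l = 1"
    using \<open>l > 1\<close> by (metis mdet_mmul mdet_mone)
  then have "mdet l y \<noteq> 0"
    by auto
  then have "y \<in> GL2 l"
    using \<open>l > 1\<close> by (simp add: y_def GL2_def Fl_def)
  with inv show ?thesis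
    by blast
qed

section \<open>The groups GL2 and Delta2\<close>

definition GL2_grp :: "int \<Rightarrow> mat2 monoid" where
  "GL2_grp l = \<lparr>carrier = GL2 l, monoid.mult = mmul l, one = mone\<rparr>"

lemma GL2_grp_simps [simp]:
  "carrier (GL2_grp l) = GL2 l" "x \<otimes>\<^bsub>GL2_grp l\<^esub> y = mmul l x y" "\<one>\<^bsub>GL2_grp l\<^esub> = mone"
  by (simp_all add: GL2_grp_def)

lemma group_GL2_grp: "prime l \<Longrightarrow> group (GL2_grp l)"
  by (rule groupI)
    (auto simp: mmul_assoc GL2_mmul GL2_left_inverse mone_GL2 prime_gt_1_int)

lemma mdet_inv_GL2:
  assumes "prime l" "x \<in> GL2 l"
  shows "(mdet l (inv\<^bsub>GL2_grp l\<^esub> x) * mdet l x) mod l = 1"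
proof -
  interpret GL: group "GL2_grp l"
    using assms(1) by (rule group_GL2_grp)
  have "mmul l (inv\<^bsub>GL2_grp l\<^esub> x) x = mone"
    using GL.l_inv[of x] assms(2) by simp
  then show ?thesis
    using assms(1) by (metis mdet_mmul mdet_mone prime_gt_1_int)
qed

lemma mdet_inv_GL2_eq:
  assumes "prime l" "x \<in> GL2 l" "y \<in> GL2 l" "mdet l x = mdet l y"
  shows "mdet l (inv\<^bsub>GL2_grp l\<^esub> x) = mdet l (inv\<^bsub>GL2_grp l\<^esub> y)"
proof -
  define u v e where "u = mdet l (inv\<^bsub>GL2_grp l\<^esub> x)" and "v = mdet l (inv\<^bsub>GL2_grp l\<^esub> y)"
    and "e = mdet l x"
  have ue: "(u * e) mod l = 1" and ve: "(v * e) mod l = 1"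
    using mdet_inv_GL2[OF assms(1,2)] mdet_inv_GL2[OF assms(1,3)] assms(4)
    by (simp_all add: u_def v_def e_def)
  have "u = (u * ((v * e) mod l)) mod l"
    by (simp add: ve u_def)
  also have "\<dots> = (v * ((u * e) mod l)) mod l"
    by (simp add: mod_mult_right_eq ac_simps)
  also have "\<dots> = v"
    by (simp add: ue v_def)
  finally show ?thesis
    by (simp add: u_def v_def)
qed

lemma Delta2_grp_eq: "Delta2_grp l = (GL2_grp l \<times>\<times> GL2_grp l)\<lparr>carrier := Delta2 l\<rparr>"
  by (simp add: Delta2_grp_def DirProd_def GL2_grp_def case_prod_beta')

lemma subgroup_Delta2:
  assumes "prime l"
  shows "subgroup (Delta2 l) (GL2_grp l \<times>\<times> GL2_grp l)"
proof -
  interpret GL: group "GL2_grp l"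
    using assms by (rule group_GL2_grp)
  interpret P: group "GL2_grp l \<times>\<times> GL2_grp l"
    by (simp add: DirProd_group GL.is_group)
  show ?thesis
  proof (rule P.subgroupI)
    show "Delta2 l \<subseteq> carrier (GL2_grp l \<times>\<times> GL2_grp l)"
      by (auto simp: Delta2_def)
    have "(mone, mone) \<in> Delta2 l"
      using assms by (simp add: Delta2_def mone_GL2 prime_gt_1_int)
    then show "Delta2 l \<noteq> {}"
      by blast
  next
    fix x assume x: "x \<in> Delta2 l"
    obtain a b where ab: "x = (a, b)" "a \<in> GL2 l" "b \<in> GL2 l" "mdet l a = mdet l b"
      using x by (auto simp: Delta2_def)
    then have "inv\<^bsub>GL2_grp l \<times>\<times> GL2_grp l\<^esub> x = (inv\<^bsub>GL2_grp l\<^esub> a, inv\<^bsub>GL2_grp l\<^esub> b)"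
      by (simp add: GL.is_group)
    moreover have "inv\<^bsub>GL2_grp l\<^esub> a \<in> GL2 l" "inv\<^bsub>GL2_grp l\<^esub> b \<in> GL2 l"
      using GL.inv_closed ab by simp_all
    ultimately show "inv\<^bsub>GL2_grp l \<times>\<times> GL2_grp l\<^esub> x \<in> Delta2 l"
      using mdet_inv_GL2_eq[OF assms ab(2-4)] by (simp add: Delta2_def)
  next
    fix x y assume "x \<in> Delta2 l" "y \<in> Delta2 l"
    moreover obtain a b c d where "x = (a, b)" "y = (c, d)"
      by (meson surj_pair)
    ultimately show "x \<otimes>\<^bsub>GL2_grp l \<times>\<times> GL2_grp l\<^esub> y \<in> Delta2 l"
      using assms by (simp add: Delta2_def GL2_mmul mdet_mmul)
  qed
qed

lemma group_Delta2_grp: "prime l \<Longrightarrow> group (Delta2_grp l)"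
  using group.subgroup_imp_group[OF DirProd_group[OF group_GL2_grp group_GL2_grp] subgroup_Delta2]
  by (simp add: Delta2_grp_eq)

lemma subgroup_DirProd_if_subgroup_Delta2:
  assumes "prime l" "subgroup G (Delta2_grp l)"
  shows "subgroup G (GL2_grp l \<times>\<times> GL2_grp l)"
proof -
  interpret P: group "GL2_grp l \<times>\<times> GL2_grp l"
    using assms(1) by (simp add: DirProd_group group_GL2_grp)
  have "G \<subseteq> Delta2 l"
    using subgroup.subset[OF assms(2)] by (simp add: Delta2_grp_def)
  then have "G \<subseteq> carrier (GL2_grp l \<times>\<times> GL2_grp l)"
    using subgroup.subset[OF subgroup_Delta2[OF assms(1)]] by blast
  moreover have "group ((GL2_grp l \<times>\<times> GL2_grp l)\<lparr>carrier := G\<rparr>)"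
    using group.subgroup_imp_group[OF group_Delta2_grp[OF assms(1)] assms(2)]
    by (simp add: Delta2_grp_eq)
  ultimately show ?thesis
    by (rule P.group_incl_imp_subgroup)
qed

section \<open>Fixed spaces\<close>

lemma subgroup_linear_form_kernel:
  assumes "l > 0"
  shows "subgroup {(x, y). x \<in> Fl l \<and> y \<in> Fl l \<and> [p*x + q*y = 0] (mod l)}
           (integer_mod_group (nat l) \<times>\<times> integer_mod_group (nat l))"
    (is "subgroup ?K ?Z")
proof -
  interpret Z: group ?Z
    by (simp add: DirProd_group)
  have carrier: "carrier (integer_mod_group (nat l)) = Fl l"
    using assms by (simp add: carrier_integer_mod_group Fl_def)
  show ?thesis
  proof (rule Z.subgroupI)
    show "?K \<subseteq> carrier ?Z" "?K \<noteq> {}"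
      using assms by (auto simp: carrier Fl_def intro!: exI[of _ 0])
  next
    fix v assume "v \<in> ?K"
    then obtain x y where v: "v = (x, y)" "x \<in> Fl l" "y \<in> Fl l" and "[p*x + q*y = 0] (mod l)"
      by blast
    have "[p*((-x) mod l) + q*((-y) mod l) = p*(-x) + q*(-y)] (mod l)"
      by (intro cong_add cong_scalar_left) simp_all
    also have "p*(-x) + q*(-y) = -(p*x + q*y)"
      by simp
    also have "[-(p*x + q*y) = -0] (mod l)"
      using \<open>[p*x + q*y = 0] (mod l)\<close> by (simp only: cong_minus_minus_iff)
    finally show "inv\<^bsub>?Z\<^esub> v \<in> ?K"
      using v assms by (simp add: carrier Fl_def)
  next
    fix v w assume "v \<in> ?K" "w \<in> ?K"
    then obtain x y u z where v: "v = (x, y)" "w = (u, z)"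
      and "[p*x + q*y = 0] (mod l)" "[p*u + q*z = 0] (mod l)"
      by blast
    have "[p*((x + u) mod l) + q*((y + z) mod l) = p*(x + u) + q*(y + z)] (mod l)"
      by (intro cong_add cong_scalar_left) simp_all
    also have "p*(x + u) + q*(y + z) = (p*x + q*y) + (p*u + q*z)"
      by (simp add: algebra_simps)
    also have "[\<dots> = 0 + 0] (mod l)"
      by (intro cong_add) fact+
    finally show "v \<otimes>\<^bsub>?Z\<^esub> w \<in> ?K"
      using v assms by (simp add: Fl_def)
  qed
qed

lemma ker1_eq_Int:
  "ker1 l (a,b,c,d) =
     {(x, y). x \<in> Fl l \<and> y \<in> Fl l \<and> [(a-1)*x + b*y = 0] (mod l)} \<inter>
     {(x, y). x \<in> Fl l \<and> y \<in> Fl l \<and> [c*x + (d-1)*y = 0] (mod l)}"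
  by (auto simp: cong_def)

(* ker1 l g is a subgroup of F_l^2, so Lagrange bounds its order; this is what makes the
   THE in the definition of dim1 well defined. *)
lemma card_ker1_dvd:
  assumes "l > 0"
  shows "card (ker1 l g) dvd nat l ^ 2"
proof -
  interpret Z: group "integer_mod_group (nat l) \<times>\<times> integer_mod_group (nat l)"
    by (simp add: DirProd_group)
  obtain a b c d where g: "g = (a,b,c,d)"
    by (cases g)
  have "subgroup (ker1 l g) (integer_mod_group (nat l) \<times>\<times> integer_mod_group (nat l))"
    unfolding g ker1_eq_Int
    by (intro Z.subgroups_Inter_pair subgroup_linear_form_kernel assms)
  then have "card (rcosets\<^bsub>integer_mod_group (nat l) \<times>\<times> integer_mod_group (nat l)\<^esub> ker1 l g)
               * card (ker1 l g) = nat l ^ 2"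
    using Z.lagrange assms by (simp add: order_def carrier_integer_mod_group power2_eq_square)
  then show ?thesis
    by (metis dvd_triv_right)
qed

lemma dim1_eqI:
  assumes "l > 1" "card (ker1 l g) = nat l ^ k"
  shows "dim1 l g = k"
  unfolding dim1_def
proof (rule the_equality)
  show "card (ker1 l g) = nat l ^ k"
    by fact
  fix k' assume "card (ker1 l g) = nat l ^ k'"
  then show "k' = k"
    using assms by (simp add: power_inject_exp)
qed

lemma card_ker1_eq_pow_dim1:
  assumes "prime l"
  shows "card (ker1 l g) = nat l ^ dim1 l g" "dim1 l g \<le> 2"
proof -
  have "l > 1"
    using assms prime_gt_1_int by blast
  moreover have "prime (nat l)"
    using assms prime_int_nat_transfer by blast
  then obtain k where "k \<le> 2" "card (ker1 l g) = nat l ^ k"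
    using card_ker1_dvd[of l g] \<open>l > 1\<close> divides_primepow_nat by auto
  ultimately show "card (ker1 l g) = nat l ^ dim1 l g" "dim1 l g \<le> 2"
    using dim1_eqI by auto
qed

lemma zero_in_ker1: "l > 0 \<Longrightarrow> (0, 0) \<in> ker1 l g"
  by (cases g) (simp add: Fl_def)

lemma ker1_mone: "ker1 l mone = Fl l \<times> Fl l"
  by (auto simp: mone_def)

lemma dim1_eq_0_iff:
  assumes "prime l"
  shows "dim1 l g = 0 \<longleftrightarrow> ker1 l g = {(0, 0)}"
proof -
  have "l > 1"
    using assms prime_gt_1_int by blast
  have "finite (ker1 l g)"
    by (cases g) (auto simp: Fl_def intro: finite_subset[of _ "{0..<l} \<times> {0..<l}"])
  then have "ker1 l g = {(0, 0)} \<longleftrightarrow> card (ker1 l g) = 1"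
    using zero_in_ker1[of l g] \<open>l > 1\<close> by (auto simp: card_1_singleton_iff)
  also have "\<dots> \<longleftrightarrow> dim1 l g = 0"
    using card_ker1_eq_pow_dim1[OF assms, of g] \<open>l > 1\<close> by (simp add: nat_eq_iff)
  finally show ?thesis
    by simp
qed

lemma dim1_eq_2_iff:
  assumes "prime l" "g \<in> GL2 l"
  shows "dim1 l g = 2 \<longleftrightarrow> g = mone"
proof
  have "l > 1"
    using assms prime_gt_1_int by blast
  have card_Fl2: "card (Fl l \<times> Fl l) = nat l ^ 2"
    by (simp add: Fl_def card_cartesian_product power2_eq_square)
  {
    assume "dim1 l g = 2"
    then have "card (ker1 l g) = card (Fl l \<times> Fl l)"
      using card_ker1_eq_pow_dim1(1)[OF assms(1)] card_Fl2 by simp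
    moreover have "ker1 l g \<subseteq> Fl l \<times> Fl l"
      by (cases g) auto
    ultimately have "ker1 l g = Fl l \<times> Fl l"
      by (simp add: card_subset_eq Fl_def)
    then have "(1, 0) \<in> ker1 l g" "(0, 1) \<in> ker1 l g"
      using \<open>l > 1\<close> by (auto simp: Fl_def)
    then show "g = mone"
      using assms(2) \<open>l > 1\<close> cong_less_imp_eq_int[of _ l 1]
      by (cases g) (auto simp: GL2_def Fl_def mone_def cong_iff_dvd_diff)
  }
  assume "g = mone"
  then show "dim1 l g = 2"
    using dim1_eqI[OF \<open>l > 1\<close>] card_Fl2 ker1_mone by simp
qed

lemma dim1_eq_1_iff:
  assumes "prime l" "g \<in> GL2 l"
  shows "dim1 l g = 1 \<longleftrightarrow> g \<noteq> mone \<and> ker1 l g \<noteq> {(0, 0)}"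
  using card_ker1_eq_pow_dim1(2)[OF assms(1), of g] dim1_eq_0_iff[OF assms(1), of g]
    dim1_eq_2_iff[OF assms] by linarith

lemma dim1_upper_elementary:
  assumes "prime l"
  shows "dim1 l (1, 1, 0, 1) = 1"
proof -
  have "l > 1"
    using assms prime_gt_1_int by blast
  then have "(1, 0) \<in> ker1 l (1, 1, 0, 1)" "(1, 1, 0, 1) \<in> GL2 l"
    by (simp_all add: Fl_def GL2_def)
  then have "ker1 l (1, 1, 0, 1) \<noteq> {(0, 0)}"
    by (auto simp del: ker1.simps)
  then show ?thesis
    using dim1_eq_1_iff[OF assms \<open>(1, 1, 0, 1) \<in> GL2 l\<close>] by (simp add: mone_def del: ker1.simps)
qed

section \<open>Normal subgroups of GL2 containing a transvection\<close>

definition SL2 :: "int \<Rightarrow> mat2 set" where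
  "SL2 l = {g \<in> GL2 l. mdet l g = 1}"

lemma SL2_elementary_factorization:
  assumes l: "prime l" and g: "(a,b,c,d) \<in> SL2 l" and "c \<noteq> 0"
  shows "\<exists>p q. (a,b,c,d) = mmul l (mmul l (1, p mod l, 0, 1) (1, 0, c, 1)) (1, q mod l, 0, 1)"
proof -
  have "l > 1"
    using l prime_gt_1_int by blast
  have Fl: "a \<in> Fl l" "b \<in> Fl l" "c \<in> Fl l" "d \<in> Fl l" and "(a*d - b*c) mod l = 1"
    using g by (auto simp: SL2_def GL2_def)
  then obtain k where k: "a*d - b*c = 1 + l*k"
    by (metis add.commute mult.commute mod_div_mult_eq)
  have "\<not> l dvd c"
    using Fl(3) \<open>c \<noteq> 0\<close> by (auto simp: Fl_def zdvd_not_zless)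
  then have "coprime c l"
    using l by (metis coprime_commute prime_imp_coprime)
  then obtain u where "[c * u = 1] (mod l)"
    using cong_solve_coprime_int by blast
  then obtain j where j: "c*u = 1 + l*j"
    by (metis cong_iff_dvd_diff dvd_def add.commute diff_eq_eq)
  define p q where "p = (a - 1) * u" and "q = (d - 1) * u"
  have "mmul l (mmul l (1, p mod l, 0, 1) (1, 0, c, 1)) (1, q mod l, 0, 1)
      = ((1 + (p mod l)*c) mod l, ((1 + (p mod l)*c)*(q mod l) + p mod l) mod l,
         c mod l, (c*(q mod l) + 1) mod l)"
    apply (simp only: mmul.simps prod.inject mod_eq_dvd_iff dvd_def)
    apply (simp only: minus_div_mult_eq_mod[symmetric])
    apply (intro conjI; algebra)
    done
  also have "\<dots> = (a,b,c,d)"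
  proof -
    have "[1 + (p mod l)*c = a] (mod l)" "[(1 + (p mod l)*c)*(q mod l) + p mod l = b] (mod l)"
      "[c*(q mod l) + 1 = d] (mod l)"
      unfolding cong_iff_dvd_diff dvd_def p_def q_def minus_div_mult_eq_mod[symmetric]
      using j k by algebra+
    then show ?thesis
      using Fl by (simp add: cong_def Fl_def)
  qed
  finally show ?thesis
    by metis
qed

lemma normal_GL2_conj_closed:
  assumes "prime l" "N \<lhd> GL2_grp l" "a \<in> N" "h \<in> GL2 l" "b \<in> GL2 l"
    and "mmul l b h = mmul l h a"
  shows "b \<in> N"
proof -
  interpret GL: group "GL2_grp l"
    using assms(1) by (rule group_GL2_grp)
  have "a \<in> GL2 l"
    using assms(2,3) normal_imp_subgroup subgroup.subset by fastforce
  then have "b = h \<otimes>\<^bsub>GL2_grp l\<^esub> a \<otimes>\<^bsub>GL2_grp l\<^esub> inv\<^bsub>GL2_grp l\<^esub> h"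
    using assms(4-6) by (metis GL.inv_solve_right' GL.m_closed GL2_grp_simps(1,2) GL.inv_closed)
  then show ?thesis
    using assms(2-4) GL.normal_inv_iff by simp
qed

lemma upper_elementary_in_normal:
  assumes l: "prime l" and N: "N \<lhd> GL2_grp l" and "(1, 1, 0, 1) \<in> N"
  shows "(1, x mod l, 0, 1) \<in> N"
proof (cases "x mod l = 0")
  case True
  then show ?thesis
    using N normal_imp_subgroup subgroup.one_closed by (fastforce simp: mone_def)
next
  case False
  have "l > 1"
    using l prime_gt_1_int by blast
  then have "(x mod l, 0, 0, 1) \<in> GL2 l" "(1, x mod l, 0, 1) \<in> GL2 l"
    using False by (simp_all add: GL2_def Fl_def)
  then show ?thesis
    using normal_GL2_conj_closed[OF l N \<open>(1, 1, 0, 1) \<in> N\<close>] by simp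
qed

lemma lower_elementary_in_normal:
  assumes l: "prime l" and N: "N \<lhd> GL2_grp l" and "(1, 1, 0, 1) \<in> N"
  shows "(1, 0, x mod l, 1) \<in> N"
proof -
  have "l > 1"
    using l prime_gt_1_int by blast
  then have "(0, 1, 1, 0) \<in> GL2 l" "(1, 0, x mod l, 1) \<in> GL2 l"
    by (simp_all add: GL2_def Fl_def zmod_minus1)
  then show ?thesis
    using normal_GL2_conj_closed[OF l N upper_elementary_in_normal[OF assms]] by simp
qed

lemma SL2_subset_normal:
  assumes l: "prime l" and N: "N \<lhd> GL2_grp l" and "(1, 1, 0, 1) \<in> N"
  shows "SL2 l \<subseteq> N"
proof -
  have mmul_closed: "mmul l x y \<in> N" if "x \<in> N" "y \<in> N" for x y
    using N that normal_imp_subgroup subgroup.m_closed by fastforce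
  have lower_left_nonzero: "(a,b,c,d) \<in> N" if "(a,b,c,d) \<in> SL2 l" "c \<noteq> 0" for a b c d
  proof -
    have "c mod l = c"
      using that by (simp add: SL2_def GL2_def Fl_def)
    then show ?thesis
      using SL2_elementary_factorization[OF l that] mmul_closed
        upper_elementary_in_normal[OF assms] lower_elementary_in_normal[OF assms, of c]
      by metis
  qed
  show ?thesis
  proof
    fix g assume g: "g \<in> SL2 l"
    obtain a b c d where g_def: "g = (a,b,c,d)"
      by (cases g)
    show "g \<in> N"
    proof (cases "c = 0")
      case False
      then show ?thesis
        using lower_left_nonzero g g_def by blast
    next
      case True
      have "l > 1"
        using l prime_gt_1_int by blast
      then have "(1, 0, 1, 1) \<in> SL2 l"
        by (simp add: SL2_def GL2_def Fl_def)
      then have "mmul l (1, 0, 1, 1) g \<in> SL2 l"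
        using g l by (simp add: SL2_def GL2_mmul mdet_mmul)
      moreover have "mmul l (1, 0, 1, 1) g = (a, b, a, (b + d) mod l)"
        using g g_def True by (simp add: SL2_def GL2_def Fl_def)
      moreover have "a \<noteq> 0"
        using g g_def True by (auto simp: SL2_def)
      ultimately have "mmul l (1, 0, 1, 1) g \<in> N"
        using lower_left_nonzero by simp
      moreover have "mmul l (1, 0, -1 mod l, 1) (1, 0, 1, 1) = mone"
        using \<open>l > 1\<close> by (simp add: mone_def mod_simps)
      then have "mmul l (1, 0, -1 mod l, 1) (mmul l (1, 0, 1, 1) g) = g"
        using g by (simp add: SL2_def flip: mmul_assoc)
      ultimately show ?thesis
        using mmul_closed lower_elementary_in_normal[OF assms] by metis
    qed
  qed
qed

section \<open>Computations over F_2 and F_3\<close>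

lemma Fl_2: "Fl 2 = {0, 1}" and Fl_3: "Fl 3 = {0, 1, 2}"
  by (auto simp: Fl_def)

lemma SL2_2_transvections:
  assumes "g \<in> SL2 2" "g \<noteq> mone" "v \<in> ker1 2 g" "v \<noteq> (0, 0)"
  shows "g \<in> {(0,1,1,0), (1,0,1,1), (1,1,0,1)}"
proof -
  obtain a b c d x y where gv: "g = (a,b,c,d)" "v = (x, y)"
    by (metis surj_pair)
  have "a \<in> {0,1}" "b \<in> {0,1}" "c \<in> {0,1}" "d \<in> {0,1}" "x \<in> {0,1}" "y \<in> {0,1}"
    using assms by (auto simp: gv SL2_def GL2_def Fl_2)
  then show ?thesis
    using assms unfolding gv insert_iff empty_iff simp_thms
    by (elim disjE) (simp_all add: SL2_def mone_def)
qed

lemma SL2_3_transvections: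
  assumes "g \<in> SL2 3" "g \<noteq> mone" "v \<in> ker1 3 g" "v \<noteq> (0, 0)"
  shows "g \<in> {(0,1,2,2), (0,2,1,2), (1,0,1,1), (1,0,2,1), (1,1,0,1), (1,2,0,1), (2,1,2,0), (2,2,1,0)}"
proof -
  obtain a b c d x y where gv: "g = (a,b,c,d)" "v = (x, y)"
    by (metis surj_pair)
  have "a \<in> {0,1,2}" "b \<in> {0,1,2}" "c \<in> {0,1,2}" "d \<in> {0,1,2}" "x \<in> {0,1,2}" "y \<in> {0,1,2}"
    using assms by (auto simp: gv SL2_def GL2_def Fl_3)
  then show ?thesis
    using assms unfolding gv insert_iff empty_iff simp_thms
    by (elim disjE) (simp_all add: SL2_def mone_def)
qed

lemma transvection_conj_elementary:
  assumes l: "l \<in> {2, 3}" and g: "g \<in> SL2 l" "dim1 l g = 1"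
  shows "\<exists>h \<in> GL2 l. mmul l (1, 1, 0, 1) h = mmul l h g"
proof -
  have "prime l" "l > 0"
    using l by auto
  then have "g \<noteq> mone" "ker1 l g \<noteq> {(0, 0)}"
    using g dim1_eq_1_iff[of l g] by (simp_all add: SL2_def)
  then obtain v where v: "v \<in> ker1 l g" "v \<noteq> (0, 0)"
    using zero_in_ker1[OF \<open>l > 0\<close>, of g] by blast
  have "\<exists>h \<in> {mone, (0,1,1,0), (0,1,1,1), (0,1,2,0), (0,1,2,1), (0,1,2,2), (0,1,1,2), (1,0,0,2)}.
          h \<in> GL2 l \<and> mmul l (1, 1, 0, 1) h = mmul l h g"
  proof (cases "l = 2")
    case True
    then show ?thesis
      using SL2_2_transvections[of g v] \<open>g \<noteq> mone\<close> v g by (auto simp: GL2_def Fl_def mone_def)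
  next
    case False
    then have "l = 3"
      using l by simp
    then show ?thesis
      using SL2_3_transvections[of g v] \<open>g \<noteq> mone\<close> v g by (auto simp: GL2_def Fl_def mone_def)
  qed
  then show ?thesis
    by blast
qed

lemma GL2_2_cube_if_dim1_0:
  assumes "g \<in> GL2 2" "dim1 2 g = 0"
  shows "mmul 2 (mmul 2 g g) g = mone"
proof -
  obtain a b c d where g_def: "g = (a,b,c,d)"
    by (cases g)
  have "ker1 2 g = {(0, 0)}"
    using assms(2) dim1_eq_0_iff[of 2 g] by simp
  then have "(1, 0) \<notin> ker1 2 g" "(0, 1) \<notin> ker1 2 g" "(1, 1) \<notin> ker1 2 g"
    by auto
  moreover have "a \<in> {0,1}" "b \<in> {0,1}" "c \<in> {0,1}" "d \<in> {0,1}"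
    using assms(1) by (auto simp: g_def GL2_def Fl_2)
  ultimately show ?thesis
    using assms(1) unfolding g_def insert_iff empty_iff simp_thms
    by (elim disjE) (simp_all add: GL2_def Fl_2 mone_def)
qed

lemma GL2_2_cube_if_dim1_1:
  assumes "g \<in> GL2 2" "dim1 2 g = 1"
  shows "mmul 2 (mmul 2 g g) g = g"
proof -
  obtain v where v: "v \<in> ker1 2 g" "v \<noteq> (0, 0)"
    using assms dim1_eq_1_iff[of 2 g] zero_in_ker1[of 2 g] by auto
  obtain a b c d x y where gv: "g = (a,b,c,d)" "v = (x, y)"
    by (metis surj_pair)
  have "a \<in> {0,1}" "b \<in> {0,1}" "c \<in> {0,1}" "d \<in> {0,1}" "x \<in> {0,1}" "y \<in> {0,1}"
    using assms(1) v by (auto simp: gv GL2_def Fl_2)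
  then show ?thesis
    using assms(1) v unfolding gv insert_iff empty_iff simp_thms
    by (elim disjE) simp_all
qed

section \<open>Subgroups of Delta2 with surjective projections\<close>

lemma normal_fst_fibre:
  assumes l: "prime l" and G: "subgroup G (Delta2_grp l)" and fst_G: "fst ` G = GL2 l"
  shows "{a. (a, mone) \<in> G} \<lhd> GL2_grp l"
proof -
  interpret GL: group "GL2_grp l"
    using l by (rule group_GL2_grp)
  interpret P: group "GL2_grp l \<times>\<times> GL2_grp l"
    by (simp add: DirProd_group GL.is_group)
  have G': "subgroup G (GL2_grp l \<times>\<times> GL2_grp l)"
    using subgroup_DirProd_if_subgroup_Delta2[OF l G] .
  have G_GL2: "a \<in> GL2 l" "b \<in> GL2 l" if "(a, b) \<in> G" for a b
    using subgroup.subset[OF G'] that by auto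
  have inv_P: "inv\<^bsub>GL2_grp l \<times>\<times> GL2_grp l\<^esub> (a, b) = (inv\<^bsub>GL2_grp l\<^esub> a, inv\<^bsub>GL2_grp l\<^esub> b)"
    if "(a, b) \<in> G" for a b
    using G_GL2[OF that] by (simp add: GL.is_group)
  show ?thesis
    unfolding GL.normal_inv_iff
  proof (intro conjI ballI)
    show "subgroup {a. (a, mone) \<in> G} (GL2_grp l)"
    proof (rule GL.subgroupI)
      show "{a. (a, mone) \<in> G} \<subseteq> carrier (GL2_grp l)"
        unfolding GL2_grp_simps using G_GL2 by blast
      have "mone \<in> {a. (a, mone) \<in> G}"
        using subgroup.one_closed[OF G'] by simp
      then show "{a. (a, mone) \<in> G} \<noteq> {}"
        by blast
    next
      fix a assume "a \<in> {a. (a, mone) \<in> G}"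
      then have "inv\<^bsub>GL2_grp l \<times>\<times> GL2_grp l\<^esub> (a, mone) \<in> G"
        using subgroup.m_inv_closed[OF G'] by simp
      then show "inv\<^bsub>GL2_grp l\<^esub> a \<in> {a. (a, mone) \<in> G}"
        using inv_P \<open>a \<in> {a. (a, mone) \<in> G}\<close> GL.inv_one by simp
    next
      fix a b assume "a \<in> {a. (a, mone) \<in> G}" "b \<in> {a. (a, mone) \<in> G}"
      then have "(a, mone) \<otimes>\<^bsub>GL2_grp l \<times>\<times> GL2_grp l\<^esub> (b, mone) \<in> G"
        using subgroup.m_closed[OF G'] by blast
      then show "a \<otimes>\<^bsub>GL2_grp l\<^esub> b \<in> {a. (a, mone) \<in> G}"
        using l by (simp add: mone_GL2 prime_gt_1_int)
    qed
  next
    fix x a assume x: "x \<in> carrier (GL2_grp l)" and a: "a \<in> {a. (a, mone) \<in> G}"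
    have "x \<in> fst ` G"
      using x fst_G by simp
    then obtain y where xy: "(x, y) \<in> G"
      by (metis imageE prod.collapse)
    then have "(x, y) \<otimes>\<^bsub>GL2_grp l \<times>\<times> GL2_grp l\<^esub> (a, mone)
                 \<otimes>\<^bsub>GL2_grp l \<times>\<times> GL2_grp l\<^esub> inv\<^bsub>GL2_grp l \<times>\<times> GL2_grp l\<^esub> (x, y) \<in> G"
      using a by (blast intro: subgroup.m_closed[OF G'] subgroup.m_inv_closed[OF G'])
    moreover have "mmul l (mmul l y mone) (inv\<^bsub>GL2_grp l\<^esub> y) = mone"
      using GL.r_inv G_GL2(2)[OF xy] by simp
    ultimately show "x \<otimes>\<^bsub>GL2_grp l\<^esub> a \<otimes>\<^bsub>GL2_grp l\<^esub> inv\<^bsub>GL2_grp l\<^esub> x \<in> {a. (a, mone) \<in> G}"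
      using inv_P[OF xy] by simp
  qed
qed

lemma Delta2_eq_if_SL2_fibre:
  assumes l: "prime l" and G: "subgroup G (Delta2_grp l)" and snd_G: "snd ` G = GL2 l"
    and SL2: "SL2 l \<subseteq> {a. (a, mone) \<in> G}"
  shows "G = Delta2 l"
proof
  interpret GL: group "GL2_grp l"
    using l by (rule group_GL2_grp)
  have G': "subgroup G (GL2_grp l \<times>\<times> GL2_grp l)"
    using subgroup_DirProd_if_subgroup_Delta2[OF l G] .
  show G_Delta2: "G \<subseteq> Delta2 l"
    using subgroup.subset[OF G] by (simp add: Delta2_grp_def)
  show "Delta2 l \<subseteq> G"
  proof
    fix z assume "z \<in> Delta2 l"
    then obtain a b where z: "z = (a, b)" "a \<in> GL2 l" "b \<in> GL2 l" "mdet l a = mdet l b"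
      by (auto simp: Delta2_def)
    have "b \<in> snd ` G"
      using z(3) snd_G by simp
    then obtain c where c: "(c, b) \<in> G"
      by (metis imageE prod.collapse)
    then have "c \<in> GL2 l" "mdet l c = mdet l a"
      using G_Delta2 z(4) by (auto simp: Delta2_def)
    define s where "s = mmul l a (inv\<^bsub>GL2_grp l\<^esub> c)"
    have "mdet l s = (mdet l (inv\<^bsub>GL2_grp l\<^esub> c) * mdet l c) mod l"
      using \<open>mdet l c = mdet l a\<close> by (simp add: s_def mdet_mmul mult.commute)
    then have "s \<in> SL2 l"
      using l \<open>c \<in> GL2 l\<close> z(2) GL.inv_closed by (simp add: SL2_def s_def mdet_inv_GL2 GL2_mmul)
    then have "(s, mone) \<otimes>\<^bsub>GL2_grp l \<times>\<times> GL2_grp l\<^esub> (c, b) \<in> G"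
      using SL2 c subgroup.m_closed[OF G'] by blast
    moreover have "mmul l s c = a"
      using \<open>c \<in> GL2 l\<close> z(2) by (simp add: s_def GL.m_assoc flip: GL2_grp_simps)
    ultimately show "z \<in> G"
      using z(1,3) by simp
  qed
qed

lemma Delta2_eq_if_transvection_fst:
  assumes l: "l \<in> {2, 3}" and G: "subgroup G (Delta2_grp l)"
    and fst_G: "fst ` G = GL2 l" and snd_G: "snd ` G = GL2 l"
    and t: "(t, mone) \<in> G" "dim1 l t = 1"
  shows "G = Delta2 l"
proof -
  have "prime l"
    using l by auto
  have "(t, mone) \<in> Delta2 l"
    using t(1) subgroup.subset[OF G] by (auto simp: Delta2_grp_def)
  then have "t \<in> SL2 l"
    using l by (auto simp: Delta2_def SL2_def mdet_mone)
  then obtain h where "h \<in> GL2 l" "mmul l (1, 1, 0, 1) h = mmul l h t"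
    using transvection_conj_elementary[OF l _ t(2)] by blast
  moreover have "(1, 1, 0, 1) \<in> GL2 l"
    using l by (auto simp: GL2_def Fl_def)
  ultimately have "(1, 1, 0, 1) \<in> {a. (a, mone) \<in> G}"
    using normal_GL2_conj_closed[OF \<open>prime l\<close> normal_fst_fibre[OF \<open>prime l\<close> G fst_G]] t(1)
    by blast
  then have "SL2 l \<subseteq> {a. (a, mone) \<in> G}"
    using SL2_subset_normal[OF \<open>prime l\<close> normal_fst_fibre[OF \<open>prime l\<close> G fst_G]] by blast
  then show ?thesis
    using Delta2_eq_if_SL2_fibre[OF \<open>prime l\<close> G snd_G] by blast
qed

lemma subgroup_swap_Delta2:
  assumes "prime l" "subgroup G (Delta2_grp l)"
  shows "subgroup (prod.swap ` G) (Delta2_grp l)"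
proof -
  have "prod.swap z \<in> Delta2 l" if "z \<in> Delta2 l" for z
    using that by (auto simp: Delta2_def)
  then have "prod.swap \<in> hom (Delta2_grp l) (Delta2_grp l)"
    by (simp add: hom_def Delta2_grp_def)
  then have "group_hom (Delta2_grp l) (Delta2_grp l) prod.swap"
    using group_Delta2_grp[OF assms(1)] by (simp add: group_hom.intro group_hom_axioms.intro)
  then show ?thesis
    using assms(2) by (rule group_hom.subgroup_img_is_subgroup)
qed

lemma Delta2_eq_if_transvection_snd:
  assumes l: "l \<in> {2, 3}" and G: "subgroup G (Delta2_grp l)"
    and fst_G: "fst ` G = GL2 l" and snd_G: "snd ` G = GL2 l"
    and t: "(mone, t) \<in> G" "dim1 l t = 1"
  shows "G = Delta2 l"
proof -
  have "prod.swap ` G = Delta2 l"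
  proof (rule Delta2_eq_if_transvection_fst[OF l])
    show "subgroup (prod.swap ` G) (Delta2_grp l)"
      using l G subgroup_swap_Delta2 by auto
    show "fst ` prod.swap ` G = GL2 l" "snd ` prod.swap ` G = GL2 l"
      using fst_G snd_G by (simp_all add: image_image)
    show "(t, mone) \<in> prod.swap ` G"
      using t(1) by (rule rev_image_eqI) simp
  qed (use t(2) in simp)
  then have "G = prod.swap ` Delta2 l"
    by (simp add: image_image flip: \<open>prod.swap ` G = Delta2 l\<close>)
  also have "\<dots> = Delta2 l"
    by (force simp: Delta2_def)
  finally show ?thesis .
qed

lemma Delta2_eq_if_dim1_pair_1_2:
  assumes l: "l \<in> {2, 3}" and G: "subgroup G (Delta2_grp l)"
    and fst_G: "fst ` G = GL2 l" and snd_G: "snd ` G = GL2 l"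
    and g: "(g1, g2) \<in> G" "{dim1 l g1, dim1 l g2} = {1, 2}"
  shows "G = Delta2 l"
proof -
  have "prime l"
    using l by auto
  have GL2: "g1 \<in> GL2 l" "g2 \<in> GL2 l"
    using g(1) subgroup.subset[OF G] by (auto simp: Delta2_grp_def Delta2_def)
  consider "dim1 l g1 = 1" "dim1 l g2 = 2" | "dim1 l g1 = 2" "dim1 l g2 = 1"
    using g(2) by (auto simp: doubleton_eq_iff)
  then show ?thesis
  proof cases
    case 1
    then have "g2 = mone"
      using dim1_eq_2_iff[OF \<open>prime l\<close> GL2(2)] by simp
    then show ?thesis
      using Delta2_eq_if_transvection_fst[OF l G fst_G snd_G] g(1) 1 by blast
  next
    case 2
    then have "g1 = mone"
      using dim1_eq_2_iff[OF \<open>prime l\<close> GL2(1)] by simp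
    then show ?thesis
      using Delta2_eq_if_transvection_snd[OF l G fst_G snd_G] g(1) 2 by blast
  qed
qed

lemma Delta2_2_eq_if_dim1_pair_0_1:
  assumes G: "subgroup G (Delta2_grp 2)"
    and fst_G: "fst ` G = GL2 2" and snd_G: "snd ` G = GL2 2"
    and g: "(g1, g2) \<in> G" "{dim1 2 g1, dim1 2 g2} = {0, 1}"
  shows "G = Delta2 2"
proof -
  have GL2: "g1 \<in> GL2 2" "g2 \<in> GL2 2"
    using g(1) subgroup.subset[OF G] by (auto simp: Delta2_grp_def Delta2_def)
  have cube_0: "dim1 2 (mmul 2 (mmul 2 g g) g) = 2" if "g \<in> GL2 2" "dim1 2 g = 0" for g
    using GL2_2_cube_if_dim1_0[OF that] dim1_eq_2_iff[of 2 mone] mone_GL2[of 2] by simp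
  have cube_1: "dim1 2 (mmul 2 (mmul 2 g g) g) = 1" if "g \<in> GL2 2" "dim1 2 g = 1" for g
    using GL2_2_cube_if_dim1_1[OF that] that(2) by simp
  consider "dim1 2 g1 = 0" "dim1 2 g2 = 1" | "dim1 2 g1 = 1" "dim1 2 g2 = 0"
    using g(2) by (auto simp: doubleton_eq_iff)
  then have "{dim1 2 (mmul 2 (mmul 2 g1 g1) g1), dim1 2 (mmul 2 (mmul 2 g2 g2) g2)} = {1, 2}"
    by cases (simp_all add: cube_0 cube_1 GL2 insert_commute)
  moreover have "(mmul 2 (mmul 2 g1 g1) g1, mmul 2 (mmul 2 g2 g2) g2) \<in> G"
    using subgroup.m_closed[OF G subgroup.m_closed[OF G g(1) g(1)] g(1)]
    by (simp add: Delta2_grp_def)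
  ultimately show ?thesis
    using Delta2_eq_if_dim1_pair_1_2[OF _ G fst_G snd_G] by simp
qed

theorem lemma6p1:
  fixes l :: int and G :: "(mat2 \<times> mat2) set"
  assumes "l \<in> {2, 3}"
    and "subgroup G (Delta2_grp l)"
    and "fst ` G = GL2 l"
    and "snd ` G = GL2 l"
  shows "G = Delta2 l \<longleftrightarrow>
    (\<exists>(g1, g2) \<in> G. (dim1 l g1, dim1 l g2) \<in>
       (if l = 2 then {(0,1),(1,0),(1,2),(2,1)} else {(1,2),(2,1)}))"
proof
  have "prime l"
    using assms(1) by auto
  assume "G = Delta2 l"
  moreover have "(mone, (1, 1, 0, 1)) \<in> Delta2 l"
    using assms(1) by (auto simp: Delta2_def GL2_def Fl_def mone_def)
  moreover have "dim1 l mone = 2"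
    using dim1_eq_2_iff[OF \<open>prime l\<close> mone_GL2] assms(1) by auto
  ultimately show "\<exists>(g1, g2) \<in> G. (dim1 l g1, dim1 l g2) \<in>
      (if l = 2 then {(0,1),(1,0),(1,2),(2,1)} else {(1,2),(2,1)})"
    using dim1_upper_elementary[OF \<open>prime l\<close>] by (intro bexI[of _ "(mone, (1, 1, 0, 1))"]) simp_all
next
  assume "\<exists>(g1, g2) \<in> G. (dim1 l g1, dim1 l g2) \<in>
      (if l = 2 then {(0,1),(1,0),(1,2),(2,1)} else {(1,2),(2,1)})"
  then obtain g1 g2 where "(g1, g2) \<in> G" and "(dim1 l g1, dim1 l g2) \<in>
      (if l = 2 then {(0,1),(1,0),(1,2),(2,1)} else {(1,2),(2,1)})"
    by blast
  moreover from this(2)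
  have "{dim1 l g1, dim1 l g2} = {1, 2} \<or> l = 2 \<and> {dim1 l g1, dim1 l g2} = {0, 1}"
    by (auto split: if_splits)
  ultimately show "G = Delta2 l"
    using Delta2_eq_if_dim1_pair_1_2[OF assms] Delta2_2_eq_if_dim1_pair_0_1 assms by blast
qed

end
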